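(* For any complex numbers $a,b,\alpha,\beta$ with $\beta a-\alpha b\neq0$ and any natural number $n\ge1$, \[ \sum_{r=0}^{\lfloor n/2\rfloor}\Psi\left(\begin{array}{cc|c} a & b & n \\ \alpha & \beta & r \end{array}\right)=\Psi(a-\alpha,b-\beta,n),\qquad \sum_{r=0}^{\lfloor (n-1)/2\rfloor}\Phi\left(\begin{array}{cc|c} a & b & n \\ \alpha & \beta & r \end{array}\right)=\Phi(a-\alpha,b-\beta,n). \]
   Context: $\delta(m)=1$ for $m$ odd, $0$ for $m$ even; $\lfloor\cdot\rfloor$ is the floor. $\Psi(a,b,n)$, $\Phi(a,b,n)$ are defined by $\Psi(a,b,0)=2$, $\Psi(a,b,1)=1$, $\Psi(a,b,n+1)=(2a-b)^{\delta(n)}\Psi(a,b,n)-a\Psi(a,b,n-1)$ and $\Phi(a,b,0)=0$, $\Phi(a,b,1)=1$, $\Phi(a,b,n+1)=(2a-b)^{\delta(n+1)}\Phi(a,b,n)-a\Phi(a,b,n-1)$. For $n\ge1$ and numbers with $\beta a-\alpha b\ne0$, $\Psi\left(\begin{array}{cc|c} a & b & n \\ \alpha & \beta & r \end{array}\right)$ ($0\le r\le\lfloor n/2\rfloor$) and $\Phi\left(\begin{array}{cc|c} a & b & n \\ \alpha & \beta & r \end{array}\right)$ ($0\le r\le\lfloor (n-1)/2\rfloor$) are the unique numbers such that, identically in $x,y$, $(\beta a-\alpha b)^{\lfloor n/2\rfloor}\frac{x^n+y^n}{(x+y)^{\delta(n)}}=\sum_{r}\Psi\left(\begin{array}{cc|c}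 a & b & n \\ \alpha & \beta & r \end{array}\right)(\alpha x^2+\beta xy+\alpha y^2)^{\lfloor n/2\rfloor-r}(ax^2+bxy+ay^2)^r$ and $(\beta a-\alpha b)^{\lfloor (n-1)/2\rfloor}\frac{x^n-y^n}{(x-y)(x+y)^{\delta(n-1)}}=\sum_{r}\Phi\left(\begin{array}{cc|c} a & b & n \\ \alpha & \beta & r \end{array}\right)(\alpha x^2+\beta xy+\alpha y^2)^{\lfloor (n-1)/2\rfloor-r}(ax^2+bxy+ay^2)^r$. *)

theory Defs
  imports Complex_Main
begin

definition delta :: "nat \<Rightarrow> nat" where
  "delta m = (if odd m then 1 else 0)"

fun PsiS :: "complex \<Rightarrow> complex \<Rightarrow> nat \<Rightarrow> complex" where
  "PsiS a b 0 = 2"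
| "PsiS a b (Suc 0) = 1"
| "PsiS a b (Suc (Suc m)) =
     (2*a - b) ^ delta (Suc m) * PsiS a b (Suc m) - a * PsiS a b m"

fun PhiS :: "complex \<Rightarrow> complex \<Rightarrow> nat \<Rightarrow> complex" where
  "PhiS a b 0 = 0"
| "PhiS a b (Suc 0) = 1"
| "PhiS a b (Suc (Suc m)) =
     (2*a - b) ^ delta (Suc (Suc m)) * PhiS a b (Suc m) - a * PhiS a b m"

text \<open>The coefficients Psi(a b n | alpha beta r), for 0 \<le> r \<le> n div 2, are the unique
numbers making the stated identity hold identically in x, y (the identity is required
wherever the left-hand quotient is defined, i.e. x + y \<noteq> 0; the coefficients are
extended by 0 for r beyond the range so that THE picks a unique function).\<close>

definition PsiC :: "complex \<Rightarrow> complex \<Rightarrow> complex \<Rightarrow> complex \<Rightarrow> nat \<Rightarrow> nat \<Rightarrow> complex" where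
  "PsiC a b \<alpha> \<beta> n = (THE c. (\<forall>r. n div 2 < r \<longrightarrow> c r = 0) \<and>
     (\<forall>x y::complex. x + y \<noteq> 0 \<longrightarrow>
        (\<beta>*a - \<alpha>*b) ^ (n div 2) * ((x^n + y^n) / (x + y) ^ delta n) =
        (\<Sum>r\<le>n div 2. c r * (\<alpha>*x^2 + \<beta>*x*y + \<alpha>*y^2) ^ (n div 2 - r)
                          * (a*x^2 + b*x*y + a*y^2) ^ r)))"

definition PhiC :: "complex \<Rightarrow> complex \<Rightarrow> complex \<Rightarrow> complex \<Rightarrow> nat \<Rightarrow> nat \<Rightarrow> complex" where
  "PhiC a b \<alpha> \<beta> n = (THE c. (\<forall>r. (n - 1) div 2 < r \<longrightarrow> c r = 0) \<and>
     (\<forall>x y::complex. x - y \<noteq> 0 \<longrightarrow> x + y \<noteq> 0 \<longrightarrow>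
        (\<beta>*a - \<alpha>*b) ^ ((n - 1) div 2) * ((x^n - y^n) / ((x - y) * (x + y) ^ delta (n - 1))) =
        (\<Sum>r\<le>(n - 1) div 2. c r * (\<alpha>*x^2 + \<beta>*x*y + \<alpha>*y^2) ^ ((n - 1) div 2 - r)
                          * (a*x^2 + b*x*y + a*y^2) ^ r)))"

end

theory Submission
  imports Defs
begin

(*
  Put P = alpha x^2 + beta xy + alpha y^2, Q = a x^2 + b xy + a y^2 and D = beta a - alpha b.
  Since D is nonzero, xy = (aP - alpha Q)/D and -(x^2 + y^2) = (bP - beta Q)/D.  The recursions
  of Psi and Phi are those of the Lucas sequences of x and y, so (x^n + y^n)/(x + y)^delta(n)
  equals Psi(xy, -(x^2 + y^2), n), and Psi evaluated at two linear forms in P, Q is a binary form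
  of degree n div 2 in P, Q; multiplied by D^(n div 2) its coefficients are the Psi-coefficients,
  which are unique because (P, Q) can be moved to (D, Dt) for all but finitely many t.  The sum of
  the coefficients of a form of degree m is D^-m times its value at (D, D), where the two linear
  forms take the values a - alpha and b - beta.
*)

lemma PsiS_sum_of_powers:
  fixes x y :: complex
  shows "PsiS (x*y) (-(x^2 + y^2)) n * (x + y) ^ delta n = x^n + y^n"
proof (induction n rule: induct_nat_012)
  case (ge2 m)
  have square: "2*(x*y) - (-(x^2 + y^2)) = (x + y)^2"
    by (simp add: power2_eq_square algebra_simps)
  have newton: "x^Suc (Suc m) + y^Suc (Suc m) = (x + y) * (x^Suc m + y^Suc m) - x*y * (x^m + y^m)"
    by (simp add: algebra_simps)
  show ?case
    unfolding newton ge2.IH[symmetric]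
    by (cases "even m") (simp_all add: delta_def square power2_eq_square algebra_simps)
qed (simp_all add: delta_def)

lemma PhiS_difference_of_powers:
  fixes x y :: complex
  shows "PhiS (x*y) (-(x^2 + y^2)) n * (x - y) * (x + y) ^ delta (n - 1) = x^n - y^n"
proof (induction n rule: induct_nat_012)
  case (ge2 m)
  have square: "2*(x*y) - (-(x^2 + y^2)) = (x + y)^2"
    by (simp add: power2_eq_square algebra_simps)
  have newton: "x^Suc (Suc m) - y^Suc (Suc m) = (x + y) * (x^Suc m - y^Suc m) - x*y * (x^m - y^m)"
    by (simp add: algebra_simps)
  show ?case
  proof (cases m)
    case (Suc k)
    then show ?thesis
      unfolding newton ge2.IH[symmetric]
      by (cases "even m") (simp_all add: delta_def square power2_eq_square algebra_simps)
  qed (simp add: delta_def algebra_simps)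
qed (simp_all add: delta_def)

definition binary_form :: "nat \<Rightarrow> ('a::comm_ring_1 \<Rightarrow> 'a \<Rightarrow> 'a) \<Rightarrow> bool" where
  "binary_form m f \<longleftrightarrow> (\<exists>c. \<forall>P Q. f P Q = (\<Sum>r\<le>m. c r * P^(m - r) * Q^r))"

lemma binary_form_zero: "binary_form m (\<lambda>_ _. 0)"
  unfolding binary_form_def by (rule exI[of _ "\<lambda>_. 0"]) simp

lemma binary_form_const: "binary_form 0 (\<lambda>_ _. k)"
  unfolding binary_form_def by (rule exI[of _ "\<lambda>_. k"]) simp

lemma binary_form_degree_one_iff:
  "binary_form 1 L \<longleftrightarrow> (\<exists>k1 k2. \<forall>P Q. L P Q = k1 * P + k2 * Q)"
proof
  assume "binary_form 1 L"
  then obtain c where "\<forall>P Q. L P Q = (\<Sum>r\<le>1. c r * P^(1 - r) * Q^r)"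
    unfolding binary_form_def by blast
  then show "\<exists>k1 k2. \<forall>P Q. L P Q = k1 * P + k2 * Q"
    by (intro exI[of _ "c 0"] exI[of _ "c 1"]) simp
next
  assume "\<exists>k1 k2. \<forall>P Q. L P Q = k1 * P + k2 * Q"
  then obtain k1 k2 where "\<forall>P Q. L P Q = k1 * P + k2 * Q" by blast
  then show "binary_form 1 L"
    unfolding binary_form_def by (intro exI[of _ "\<lambda>r. if r = 0 then k1 else k2"]) simp
qed

lemma binary_form_add:
  assumes "binary_form m f" and "binary_form m g"
  shows "binary_form m (\<lambda>P Q. f P Q + g P Q)"
proof -
  obtain c d where "\<forall>P Q. f P Q = (\<Sum>r\<le>m. c r * P^(m - r) * Q^r)"
    and "\<forall>P Q. g P Q = (\<Sum>r\<le>m. d r * P^(m - r) * Q^r)"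
    using assms unfolding binary_form_def by blast
  then show ?thesis
    unfolding binary_form_def
    by (intro exI[of _ "\<lambda>r. c r + d r"]) (simp add: sum.distrib algebra_simps)
qed

lemma binary_form_cmult:
  assumes "binary_form m f"
  shows "binary_form m (\<lambda>P Q. k * f P Q)"
proof -
  obtain c where "\<forall>P Q. f P Q = (\<Sum>r\<le>m. c r * P^(m - r) * Q^r)"
    using assms unfolding binary_form_def by blast
  then show ?thesis
    unfolding binary_form_def
    by (intro exI[of _ "\<lambda>r. k * c r"]) (simp add: sum_distrib_left algebra_simps)
qed

lemma binary_form_diff:
  assumes "binary_form m f" and "binary_form m g"
  shows "binary_form m (\<lambda>P Q. f P Q - g P Q)"
  using binary_form_add[OF assms(1) binary_form_cmult[OF assms(2), of "-1"]] by simp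

lemma binary_form_mult_fst:
  assumes "binary_form m f"
  shows "binary_form (Suc m) (\<lambda>P Q. P * f P Q)"
proof -
  obtain c where c: "\<forall>P Q. f P Q = (\<Sum>r\<le>m. c r * P^(m - r) * Q^r)"
    using assms unfolding binary_form_def by blast
  define d where "d r = (if r \<le> m then c r else 0)" for r
  have "P * f P Q = (\<Sum>r\<le>Suc m. d r * P^(Suc m - r) * Q^r)" for P Q
    unfolding c[rule_format] sum_distrib_left d_def
    by (simp, rule sum.cong) (auto simp: Suc_diff_le)
  then show ?thesis
    unfolding binary_form_def by blast
qed

lemma binary_form_mult_snd:
  assumes "binary_form m f"
  shows "binary_form (Suc m) (\<lambda>P Q. Q * f P Q)"
proof -
  obtain c where c: "\<forall>P Q. f P Q = (\<Sum>r\<le>m. c r * P^(m - r) * Q^r)"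
    using assms unfolding binary_form_def by blast
  define d where "d r = (if r = 0 then 0 else c (r - 1))" for r
  have "Q * f P Q = (\<Sum>r\<le>Suc m. d r * P^(Suc m - r) * Q^r)" for P Q
    unfolding c[rule_format] sum_distrib_left sum.atMost_Suc_shift d_def
    by (simp add: algebra_simps)
  then show ?thesis
    unfolding binary_form_def by blast
qed

lemma binary_form_mult_degree_one:
  assumes "binary_form 1 L" and "binary_form m f"
  shows "binary_form (Suc m) (\<lambda>P Q. L P Q * f P Q)"
proof -
  obtain k1 k2 where "\<forall>P Q. L P Q = k1 * P + k2 * Q"
    using assms(1) unfolding binary_form_degree_one_iff by blast
  moreover have "binary_form (Suc m) (\<lambda>P Q. k1 * (P * f P Q) + k2 * (Q * f P Q))"
    using assms(2) by (intro binary_form_add binary_form_cmult binary_form_mult_fst binary_form_mult_snd)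
  ultimately show ?thesis
    by (simp add: algebra_simps)
qed

lemma binary_form_PsiS:
  fixes A B :: "complex \<Rightarrow> complex \<Rightarrow> complex"
  assumes A: "binary_form 1 A" and B: "binary_form 1 B"
  shows "binary_form (n div 2) (\<lambda>P Q. PsiS (A P Q) (B P Q) n)"
proof (induction n rule: induct_nat_012)
  case (ge2 m)
  have L: "binary_form 1 (\<lambda>P Q. 2 * A P Q - B P Q)"
    using A B by (intro binary_form_diff binary_form_cmult)
  show ?case
  proof (cases "even m")
    case True
    then have "delta (Suc m) = 1" "Suc m div 2 = m div 2" "Suc (Suc m) div 2 = Suc (m div 2)"
      by (auto simp: delta_def)
    with ge2.IH show ?thesis
      by (simp del: One_nat_def)
        (intro binary_form_diff binary_form_mult_degree_one L A)
  next
    case False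
    then have "delta (Suc m) = 0" "Suc m div 2 = Suc (m div 2)" "Suc (Suc m) div 2 = Suc (m div 2)"
      by (auto simp: delta_def elim: oddE)
    with ge2.IH show ?thesis
      by simp (intro binary_form_diff binary_form_mult_degree_one A)
  qed
qed (simp_all add: binary_form_const)

lemma binary_form_PhiS:
  fixes A B :: "complex \<Rightarrow> complex \<Rightarrow> complex"
  assumes A: "binary_form 1 A" and B: "binary_form 1 B"
  shows "binary_form ((n - 1) div 2) (\<lambda>P Q. PhiS (A P Q) (B P Q) n)"
proof (induction n rule: induct_nat_012)
  case (ge2 m)
  have L: "binary_form 1 (\<lambda>P Q. 2 * A P Q - B P Q)"
    using A B by (intro binary_form_diff binary_form_cmult)
  consider "m = 0" | "odd m" | "even m" "m \<noteq> 0" by blast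
  then show ?case
  proof cases
    case 1
    then show ?thesis by (simp add: delta_def binary_form_const)
  next
    case 2
    then have "delta (Suc (Suc m)) = 1" "(Suc m - 1) div 2 = (m - 1) div 2"
      "(Suc (Suc m) - 1) div 2 = Suc ((m - 1) div 2)"
      by (auto simp: delta_def elim: oddE)
    with ge2.IH show ?thesis
      by (simp del: One_nat_def)
        (intro binary_form_diff binary_form_mult_degree_one L A)
  next
    case 3
    then have "delta (Suc (Suc m)) = 0" "(Suc m - 1) div 2 = Suc ((m - 1) div 2)"
      "(Suc (Suc m) - 1) div 2 = Suc ((m - 1) div 2)"
      by (auto simp: delta_def elim!: evenE)
    with ge2.IH show ?thesis
      by simp (intro binary_form_diff binary_form_mult_degree_one A)
  qed
qed (simp_all add: binary_form_zero binary_form_const)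

lemma homogeneous_sum_scale:
  fixes c :: "nat \<Rightarrow> 'a::comm_ring_1"
  shows "(\<Sum>r\<le>m. c r * s^(m - r) * (s*t)^r) = s^m * (\<Sum>r\<le>m. c r * t^r)"
proof -
  have "s^(m - r) * (s*t)^r = s^m * t^r" if "r \<le> m" for r
    using that by (simp add: power_mult_distrib mult.assoc[symmetric] power_add[symmetric])
  then show ?thesis
    unfolding sum_distrib_left by (intro sum.cong) (simp_all add: mult.assoc)
qed

lemma sum_squares_and_product_surj:
  fixes u p :: complex
  obtains x y where "x^2 + y^2 = u" and "x * y = p"
proof -
  define s w where "s = csqrt (u + 2*p)" and "w = csqrt (u - 2*p)"
  have "s^2 = u + 2*p" and "w^2 = u - 2*p"
    by (simp_all add: s_def w_def)
  then have "((s + w)/2)^2 + ((s - w)/2)^2 = u" and "((s + w)/2) * ((s - w)/2) = p"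
    by (simp_all add: field_simps power2_eq_square)
  then show ?thesis
    by (rule that)
qed

lemma finite_affine_roots:
  fixes p q :: "'a::field"
  assumes "p \<noteq> 0 \<or> q \<noteq> 0"
  shows "finite {t. p + q * t = 0}"
proof (cases "q = 0")
  case False
  then have "{t. p + q * t = 0} \<subseteq> {-p/q}"
    by (auto simp: field_simps add_eq_0_iff)
  then show ?thesis
    using finite_subset by blast
qed (use assms in simp)

lemma coefficients_zero_if_form_vanishes:
  fixes a b \<alpha> \<beta> :: complex and d :: "nat \<Rightarrow> complex"
  assumes D: "\<beta>*a - \<alpha>*b \<noteq> 0"
    and vanish: "\<And>x y. x + y \<noteq> 0 \<Longrightarrow> x - y \<noteq> 0 \<Longrightarrow>
      (\<Sum>r\<le>m. d r * (\<alpha>*x^2 + \<beta>*x*y + \<alpha>*y^2)^(m - r) * (a*x^2 + b*x*y + a*y^2)^r) = 0"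
    and "r \<le> m"
  shows "d r = 0"
proof -
  define bad where "bad = {t. (2*a - b) + (\<beta> - 2*\<alpha>) * t = 0} \<union> {t. (-2*a - b) + (\<beta> + 2*\<alpha>) * t = 0}"
  have "\<beta>*a - \<alpha>*b = (\<beta> - 2*\<alpha>) * a + \<alpha> * (2*a - b)"
    and "\<beta>*a - \<alpha>*b = (\<beta> + 2*\<alpha>) * a + \<alpha> * (-2*a - b)"
    by (simp_all add: algebra_simps)
  then have "finite bad"
    unfolding bad_def using D
    by (intro finite_UnI finite_affine_roots) auto
  have "t \<in> {t. (\<Sum>r\<le>m. d r * t^r) = 0}" if "t \<notin> bad" for t
  proof -
    \<comment> \<open>chosen so that the two quadratic forms take the values D and D t\<close>
    obtain x y where xy: "x^2 + y^2 = \<beta>*t - b" "x * y = a - \<alpha>*t"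
      by (rule sum_squares_and_product_surj)
    have "(x + y)^2 = (x^2 + y^2) + 2 * (x * y)" and "(x - y)^2 = (x^2 + y^2) - 2 * (x * y)"
      by (simp_all add: power2_eq_square algebra_simps)
    then have "(x + y)^2 = (2*a - b) + (\<beta> - 2*\<alpha>) * t" and "(x - y)^2 = (-2*a - b) + (\<beta> + 2*\<alpha>) * t"
      unfolding xy by (simp_all add: algebra_simps)
    then have "x + y \<noteq> 0" and "x - y \<noteq> 0"
      using that by (auto simp: bad_def)
    moreover have "\<alpha>*x^2 + \<beta>*x*y + \<alpha>*y^2 = \<alpha> * (x^2 + y^2) + \<beta> * (x * y)"
      and "a*x^2 + b*x*y + a*y^2 = a * (x^2 + y^2) + b * (x * y)"
      by (simp_all add: algebra_simps)
    then have "\<alpha>*x^2 + \<beta>*x*y + \<alpha>*y^2 = \<beta>*a - \<alpha>*b"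
      and "a*x^2 + b*x*y + a*y^2 = (\<beta>*a - \<alpha>*b) * t"
      unfolding xy by (simp_all add: algebra_simps)
    ultimately have "(\<Sum>r\<le>m. d r * (\<beta>*a - \<alpha>*b)^(m - r) * ((\<beta>*a - \<alpha>*b) * t)^r) = 0"
      using vanish[of x y] by simp
    then show ?thesis
      using D by (simp add: homogeneous_sum_scale)
  qed
  then have "UNIV - bad \<subseteq> {t. (\<Sum>r\<le>m. d r * t^r) = 0}"
    by blast
  moreover have "infinite (UNIV - bad)"
    using \<open>finite bad\<close> infinite_UNIV_char_0[where 'a=complex] by (rule Diff_infinite_finite)
  ultimately have "infinite {t. (\<Sum>r\<le>m. d r * t^r) = 0}"
    by (rule infinite_super)
  then show ?thesis
    using polyfun_finite_roots[of d m] \<open>r \<le> m\<close> by auto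
qed

lemma sum_unique_coefficients:
  fixes a b \<alpha> \<beta> :: complex and F T :: "complex \<Rightarrow> complex \<Rightarrow> complex"
    and C :: "complex \<Rightarrow> complex \<Rightarrow> bool"
  assumes D: "\<beta>*a - \<alpha>*b \<noteq> 0"
    and F: "binary_form m F"
    and C: "\<And>x y. x + y \<noteq> 0 \<Longrightarrow> x - y \<noteq> 0 \<Longrightarrow> C x y"
    and T: "\<And>x y. C x y \<Longrightarrow> T x y = F (\<alpha>*x^2 + \<beta>*x*y + \<alpha>*y^2) (a*x^2 + b*x*y + a*y^2)"
  shows "(\<Sum>r\<le>m. (THE c. (\<forall>r. m < r \<longrightarrow> c r = 0) \<and>
      (\<forall>x y. C x y \<longrightarrow> (\<beta>*a - \<alpha>*b)^m * T x y =
        (\<Sum>r\<le>m. c r * (\<alpha>*x^2 + \<beta>*x*y + \<alpha>*y^2)^(m - r) * (a*x^2 + b*x*y + a*y^2)^r))) r)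
    = F (\<beta>*a - \<alpha>*b) (\<beta>*a - \<alpha>*b)"
proof -
  obtain c where c: "\<And>P Q. F P Q = (\<Sum>r\<le>m. c r * P^(m - r) * Q^r)"
    using F unfolding binary_form_def by blast
  define c' where "c' r = (if r \<le> m then (\<beta>*a - \<alpha>*b)^m * c r else 0)" for r
  have expansion: "(\<beta>*a - \<alpha>*b)^m * T x y =
      (\<Sum>r\<le>m. c' r * (\<alpha>*x^2 + \<beta>*x*y + \<alpha>*y^2)^(m - r) * (a*x^2 + b*x*y + a*y^2)^r)"
    if "C x y" for x y
    unfolding T[OF that] c sum_distrib_left c'_def by (simp add: mult.assoc)
  have "(THE c. (\<forall>r. m < r \<longrightarrow> c r = 0) \<and>
      (\<forall>x y. C x y \<longrightarrow> (\<beta>*a - \<alpha>*b)^m * T x y =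
        (\<Sum>r\<le>m. c r * (\<alpha>*x^2 + \<beta>*x*y + \<alpha>*y^2)^(m - r) * (a*x^2 + b*x*y + a*y^2)^r))) = c'"
  proof (rule the_equality)
    show "(\<forall>r. m < r \<longrightarrow> c' r = 0) \<and> (\<forall>x y. C x y \<longrightarrow> (\<beta>*a - \<alpha>*b)^m * T x y =
        (\<Sum>r\<le>m. c' r * (\<alpha>*x^2 + \<beta>*x*y + \<alpha>*y^2)^(m - r) * (a*x^2 + b*x*y + a*y^2)^r))"
      using expansion by (simp add: c'_def)
  next
    fix e
    assume e: "(\<forall>r. m < r \<longrightarrow> e r = 0) \<and> (\<forall>x y. C x y \<longrightarrow> (\<beta>*a - \<alpha>*b)^m * T x y =
        (\<Sum>r\<le>m. e r * (\<alpha>*x^2 + \<beta>*x*y + \<alpha>*y^2)^(m - r) * (a*x^2 + b*x*y + a*y^2)^r))"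
    have "e r - c' r = 0" if "r \<le> m" for r
    proof (rule coefficients_zero_if_form_vanishes[OF D _ that])
      fix x y :: complex
      assume "x + y \<noteq> 0" and "x - y \<noteq> 0"
      then have "C x y" by (rule C)
      with e expansion show "(\<Sum>r\<le>m. (e r - c' r) * (\<alpha>*x^2 + \<beta>*x*y + \<alpha>*y^2)^(m - r)
          * (a*x^2 + b*x*y + a*y^2)^r) = 0"
        by (simp add: left_diff_distrib sum_subtractf)
    qed
    with e show "e = c'"
      by (auto simp: c'_def not_le)
  qed
  then show ?thesis
    using homogeneous_sum_scale[where c=c and s="\<beta>*a - \<alpha>*b" and t=1]
    by (simp add: c c'_def sum_distrib_left)
qed

lemma quadratic_forms_change_of_variables:
  fixes a b \<alpha> \<beta> x y :: complex
  assumes "\<beta>*a - \<alpha>*b \<noteq> 0"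
  shows "(a * (\<alpha>*x^2 + \<beta>*x*y + \<alpha>*y^2) - \<alpha> * (a*x^2 + b*x*y + a*y^2)) / (\<beta>*a - \<alpha>*b) = x * y"
    and "(b * (\<alpha>*x^2 + \<beta>*x*y + \<alpha>*y^2) - \<beta> * (a*x^2 + b*x*y + a*y^2)) / (\<beta>*a - \<alpha>*b)
      = -(x^2 + y^2)"
  using assms by (simp_all add: field_simps)

lemma binary_form_linear:
  fixes k1 k2 :: "'a::field"
  shows "binary_form 1 (\<lambda>P Q. (k1 * P - k2 * Q) / d)"
  unfolding binary_form_degree_one_iff
  by (intro exI[of _ "k1 / d"] exI[of _ "- k2 / d"]) (simp add: diff_divide_distrib)

lemma sum_PsiC:
  assumes D: "\<beta>*a - \<alpha>*b \<noteq> 0"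
  shows "(\<Sum>r\<le>n div 2. PsiC a b \<alpha> \<beta> n r) = PsiS (a - \<alpha>) (b - \<beta>) n"
proof -
  define F where "F P Q = PsiS ((a*P - \<alpha>*Q) / (\<beta>*a - \<alpha>*b)) ((b*P - \<beta>*Q) / (\<beta>*a - \<alpha>*b)) n"
    for P Q
  have form: "binary_form (n div 2) F"
    unfolding F_def by (intro binary_form_PsiS binary_form_linear)
  have "(\<Sum>r\<le>n div 2. PsiC a b \<alpha> \<beta> n r) = F (\<beta>*a - \<alpha>*b) (\<beta>*a - \<alpha>*b)"
    unfolding PsiC_def
  proof (rule sum_unique_coefficients[OF D form])
    fix x y :: complex
    assume "x + y \<noteq> 0"
    then show "(x^n + y^n) / (x + y) ^ delta n = F (\<alpha>*x^2 + \<beta>*x*y + \<alpha>*y^2) (a*x^2 + b*x*y + a*y^2)"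
      unfolding F_def quadratic_forms_change_of_variables[OF D]
      using PsiS_sum_of_powers[of x y n] by (simp add: divide_eq_eq)
  qed
  also have "\<dots> = PsiS (a - \<alpha>) (b - \<beta>) n"
    using D by (simp add: F_def flip: left_diff_distrib)
  finally show ?thesis .
qed

lemma sum_PhiC:
  assumes D: "\<beta>*a - \<alpha>*b \<noteq> 0"
  shows "(\<Sum>r\<le>(n - 1) div 2. PhiC a b \<alpha> \<beta> n r) = PhiS (a - \<alpha>) (b - \<beta>) n"
proof -
  define F where "F P Q = PhiS ((a*P - \<alpha>*Q) / (\<beta>*a - \<alpha>*b)) ((b*P - \<beta>*Q) / (\<beta>*a - \<alpha>*b)) n"
    for P Q
  have form: "binary_form ((n - 1) div 2) F"
    unfolding F_def by (intro binary_form_PhiS binary_form_linear)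
  have "(\<Sum>r\<le>(n - 1) div 2. PhiC a b \<alpha> \<beta> n r) = F (\<beta>*a - \<alpha>*b) (\<beta>*a - \<alpha>*b)"
    unfolding PhiC_def
  proof (rule sum_unique_coefficients[where C = "\<lambda>x y. x - y \<noteq> 0 \<and> x + y \<noteq> 0",
        unfolded imp_conjL, OF D form])
    fix x y :: complex
    assume "x - y \<noteq> 0 \<and> x + y \<noteq> 0"
    then show "(x^n - y^n) / ((x - y) * (x + y) ^ delta (n - 1))
        = F (\<alpha>*x^2 + \<beta>*x*y + \<alpha>*y^2) (a*x^2 + b*x*y + a*y^2)"
      unfolding F_def quadratic_forms_change_of_variables[OF D]
      using PhiS_difference_of_powers[of x y n] by (simp add: divide_eq_eq mult.assoc)
  qed simp
  also have "\<dots> = PhiS (a - \<alpha>) (b - \<beta>) n"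
    using D by (simp add: F_def flip: left_diff_distrib)
  finally show ?thesis .
qed

theorem theorem10p3:
  fixes a b \<alpha> \<beta> :: complex and n :: nat
  assumes "\<beta>*a - \<alpha>*b \<noteq> 0" and "n \<ge> 1"
  shows "(\<Sum>r\<le>n div 2. PsiC a b \<alpha> \<beta> n r) = PsiS (a - \<alpha>) (b - \<beta>) n
       \<and> (\<Sum>r\<le>(n - 1) div 2. PhiC a b \<alpha> \<beta> n r) = PhiS (a - \<alpha>) (b - \<beta>) n"
  using sum_PsiC[OF assms(1)] sum_PhiC[OF assms(1)] by blast

end
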